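(* Let $\Sigma=(\{x_1,x_2\},\{F_1,F_2\})$ be an LP seed of rank $2$ with $\hat F_1=F_1$ and $\hat F_2=F_2$, and let $x'_2=F_2/x_2$. Then $$R[x_1,x_2^{\pm1}]\cap R[x_1^{\pm1},x_2,x'_2]=R[x_1,x_2,x'_2].$$
   Context: $R$ is a unique factorization domain containing $\mathbb{Z}$ and $\mathcal{F}$ is the field of rational functions in $2$ variables over $\mathrm{Frac}(R)$. An LP seed of rank $2$ is a pair $(\{x_1,x_2\},\{F_1,F_2\})$ where $\{x_1,x_2\}$ is a transcendence basis of $\mathcal{F}$ over $\mathrm{Frac}(R)$ and $F_1,F_2$ are irreducible polynomials in $R[x_1,x_2]$, neither divisible by $x_1$ or $x_2$, with $F_1$ not involving $x_1$ and $F_2$ not involving $x_2$. The exchange Laurent polynomial is $\hat F_j=F_j/x_k^{a}$ ($\{j,k\}=\{1,2\}$), with $a\in\mathbb{Z}_{\ge0}$ maximal such that $F_k^{a}$ divides $F_j|_{x_k\leftarrow F_k/x'_k}$ in $R[(x'_k)^{-1}]$ (for $F_j$ regarded in the remaining variables). All rings are subrings of $\mathcal{F}$. *)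

theory Defs
  imports "HOL-Computational_Algebra.Polynomial" "HOL-Computational_Algebra.Fraction_Field"
    "HOL-Computational_Algebra.Factorial_Ring"
begin

text \<open>Model: R[x1,x2] is represented by the type 'a poly poly, the inner variable
  being x1 and the outer variable being x2.\<close>

type_synonym 'a bipoly = "'a poly poly"

definition in_x1 :: "'a::comm_semiring_1 poly \<Rightarrow> 'a bipoly" where
  "in_x1 p = [:p:]"

definition in_x2 :: "'a::comm_semiring_1 poly \<Rightarrow> 'a bipoly" where
  "in_x2 p = map_poly (\<lambda>c. [:c:]) p"

definition X1 :: "'a::comm_semiring_1 bipoly" where "X1 = in_x1 [:0, 1:]"
definition X2 :: "'a::comm_semiring_1 bipoly" where "X2 = in_x2 [:0, 1:]"

definition fr :: "'a::idom bipoly \<Rightarrow> 'a bipoly fract" where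
  "fr p = Fract p 1"

inductive_set gen_ring :: "'a::idom bipoly fract set \<Rightarrow> 'a bipoly fract set"
  for G where
    const: "fr [:[:c:]:] \<in> gen_ring G"
  | gen: "g \<in> G \<Longrightarrow> g \<in> gen_ring G"
  | add: "a \<in> gen_ring G \<Longrightarrow> b \<in> gen_ring G \<Longrightarrow> a + b \<in> gen_ring G"
  | neg: "a \<in> gen_ring G \<Longrightarrow> - a \<in> gen_ring G"
  | mult: "a \<in> gen_ring G \<Longrightarrow> b \<in> gen_ring G \<Longrightarrow> a * b \<in> gen_ring G"

text \<open>Exchange Laurent polynomial in rank 2.  F_j is a polynomial in x_k only
  (given as univariate polynomial fj), F_k is a polynomial in x_j only (fk).
  Substituting x_k := F_k / x'_k into F_j gives, writing y = (x'_k)^{-1},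
  sum_i c_i F_k^i y^i, an element of R[x_j][y] (outer variable y, coefficients in R[x_j]).\<close>
definition lp_subst :: "'a::comm_semiring_1 poly \<Rightarrow> 'a poly \<Rightarrow> 'a poly poly" where
  "lp_subst fj fk = (\<Sum>i\<le>degree fj. monom (smult (coeff fj i) (fk ^ i)) i)"

definition lp_exp :: "'a::comm_semiring_1 poly \<Rightarrow> 'a poly \<Rightarrow> nat" where
  "lp_exp fj fk = (GREATEST a. [:fk ^ a:] dvd lp_subst fj fk)"

definition hatF1 :: "'a::idom poly \<Rightarrow> 'a poly \<Rightarrow> 'a bipoly fract" where
  "hatF1 f1 f2 = fr (in_x2 f1) / fr X2 ^ lp_exp f1 f2"

definition hatF2 :: "'a::idom poly \<Rightarrow> 'a poly \<Rightarrow> 'a bipoly fract" where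
  "hatF2 f1 f2 = fr (in_x1 f2) / fr X1 ^ lp_exp f2 f1"

end

theory Submission imports Defs begin

text \<open>Write F for F_2, a polynomial in x_1 alone, and x_2' = F / x_2.  Every element of
  R[x_1, x_2^{\<plusminus>1}] is p / x_2^n and every element of R[x_1^{\<plusminus>1}, x_2, x_2'] is
  q / (x_1^N x_2^m) with q subject to a divisibility condition: the coefficient of x_2^j
  in q is divisible by F^{m-j}, since x_2^a x_2'^b = F^b x_2^{a-b}.  Conversely every such
  q / x_2^m lies in R[x_1, x_2, x_2'].  For an element of the intersection,
  x_1^N p x_2^m = q x_2^n, and since x_1 is prime and does not divide F, the factor x_1^N
  can be cancelled without affecting the divisibility condition.\<close>

lemma X1_eq: "X1 = [:[:0, 1:]:]"
  by (simp add: X1_def in_x1_def)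

lemma X2_eq: "(X2 :: 'a::comm_semiring_1 bipoly) = monom 1 1"
  by (simp add: X2_def in_x2_def map_poly_pCons monom_altdef)

lemma X1_nonzero [simp]: "X1 \<noteq> (0 :: 'a::idom bipoly)"
  by (simp add: X1_eq)

lemma X2_nonzero [simp]: "X2 \<noteq> (0 :: 'a::idom bipoly)"
  by (simp add: X2_eq)

lemma prime_elem_pCons_0_1: "prime_elem [:0, 1 :: 'a::idom:]"
proof (rule prime_elemI)
  show "\<not> [:0, 1 :: 'a:] dvd 1"
    by (auto simp: is_unit_poly_iff)
  show "[:0, 1:] dvd a \<or> [:0, 1:] dvd b" if "[:0, 1 :: 'a:] dvd a * b" for a b
    using that dvd_iff_poly_eq_0[of "0 :: 'a"] by simp
qed simp

lemma prime_elem_power_dvd_cancel: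
  fixes p f :: "'a::idom"
  assumes "prime_elem p" and "\<not> p dvd f"
  shows "f ^ k dvd p ^ N * c \<Longrightarrow> f ^ k dvd c"
proof (induction N arbitrary: c)
  case (Suc N)
  from Suc.prems obtain e where e: "p * (p ^ N * c) = f ^ k * e"
    by (metis dvdE mult.assoc power_Suc)
  have "\<not> p dvd f ^ k"
    using assms prime_elem_dvd_power by blast
  moreover have "p dvd f ^ k * e"
    by (metis e dvd_triv_left)
  ultimately obtain e' where "e = p * e'"
    using assms(1) prime_elem_dvd_mult_iff by blast
  with e assms(1) have "p ^ N * c = f ^ k * e'"
    by (simp add: ac_simps)
  then have "f ^ k dvd p ^ N * c"
    by simp
  then show ?case
    by (rule Suc.IH)
qed simp

lemma Fract_power: "Fract (a :: 'a::idom) b ^ n = Fract (a ^ n) (b ^ n)"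
  by (induction n) (simp_all add: One_fract_def)

lemma Fract_add_same_denom: "c \<noteq> 0 \<Longrightarrow> Fract (a :: 'a::idom) c + Fract b c = Fract (a + b) c"
  by (simp add: eq_fract algebra_simps)

lemma gen_ring_subset:
  assumes "G \<subseteq> gen_ring H"
  shows "gen_ring G \<subseteq> gen_ring H"
proof
  show "x \<in> gen_ring H" if "x \<in> gen_ring G" for x
    using that by induction (use assms in \<open>auto intro: gen_ring.intros\<close>)
qed

lemma zero_in_gen_ring: "0 \<in> gen_ring G"
  using gen_ring.const[of 0 G] by (simp add: fr_def Zero_fract_def)

lemma one_in_gen_ring: "1 \<in> gen_ring G"
  using gen_ring.const[of 1 G] by (simp add: fr_def One_fract_def one_pCons[symmetric])

lemma power_in_gen_ring: "a \<in> gen_ring G \<Longrightarrow> a ^ n \<in> gen_ring G"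
  by (induction n) (auto intro: gen_ring.intros one_in_gen_ring)

lemma fr_in_x1_in_gen_ring:
  assumes "fr X1 \<in> G"
  shows "fr (in_x1 d) \<in> gen_ring G"
proof (induction d)
  case 0
  then show ?case
    using zero_in_gen_ring by (simp add: in_x1_def fr_def Zero_fract_def)
next
  case (pCons a q)
  have "fr (in_x1 (pCons a q)) = fr [:[:a:]:] + fr X1 * fr (in_x1 q)"
    by (simp add: fr_def in_x1_def X1_eq)
  then show ?case
    using pCons assms by (auto intro: gen_ring.intros)
qed

text \<open>With coeff p j the coefficient of x_2^j, this holds exactly when p / x_2^n lies in
  R[x_1, x_2, f / x_2].\<close>

definition exchange_numerator :: "'a::idom poly \<Rightarrow> nat \<Rightarrow> 'a bipoly \<Rightarrow> bool" where
  "exchange_numerator f n p \<longleftrightarrow> (\<forall>j. f ^ (n - j) dvd coeff p j)"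

lemma exchange_numerator_mult:
  assumes p: "exchange_numerator f n p" and q: "exchange_numerator f m q"
  shows "exchange_numerator f (n + m) (p * q)"
  unfolding exchange_numerator_def coeff_mult
proof (intro allI dvd_sum)
  fix j i :: nat assume "i \<in> {..j}"
  then have "f ^ (n + m - j) dvd f ^ ((n - i) + (m - (j - i)))"
    by (intro le_imp_power_dvd) auto
  also have "\<dots> dvd coeff p i * coeff q (j - i)"
    unfolding power_add using p q by (simp add: exchange_numerator_def mult_dvd_mono)
  finally show "f ^ (n + m - j) dvd coeff p i * coeff q (j - i)" .
qed

lemma exchange_numerator_add:
  "exchange_numerator f n p \<Longrightarrow> exchange_numerator f n q \<Longrightarrow> exchange_numerator f n (p + q)"
  by (simp add: exchange_numerator_def)

lemma exchange_numerator_uminus: "exchange_numerator f n p \<Longrightarrow> exchange_numerator f n (- p)"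
  by (simp add: exchange_numerator_def)

lemma exchange_numerator_0: "exchange_numerator f 0 p"
  by (simp add: exchange_numerator_def)

lemma exchange_numerator_X2_power: "exchange_numerator f n (X2 ^ n)"
  by (simp add: exchange_numerator_def X2_eq monom_power coeff_monom)

lemma exchange_numerator_X1_X2_power: "exchange_numerator f n (X1 ^ N * X2 ^ n)"
  using exchange_numerator_mult[OF exchange_numerator_0 exchange_numerator_X2_power] by simp

lemma exchange_numerator_const_f: "exchange_numerator f 1 [:f:]"
  by (auto simp: exchange_numerator_def coeff_pCons split: nat.splits)

lemma exchange_numerator_cancel_X1_power:
  assumes "\<not> [:0, 1:] dvd f" and "exchange_numerator f n (X1 ^ N * p)"
  shows "exchange_numerator f n p"
  unfolding exchange_numerator_def
proof
  fix j
  have "coeff (X1 ^ N * p) j = [:0, 1:] ^ N * coeff p j"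
    by (simp add: X1_eq poly_const_pow)
  then show "f ^ (n - j) dvd coeff p j"
    using assms prime_elem_power_dvd_cancel[OF prime_elem_pCons_0_1]
    unfolding exchange_numerator_def by metis
qed

lemma Fract_exchange_numerator_in_gen_ring:
  assumes "exchange_numerator f n p"
  shows "Fract p (X2 ^ n) \<in> gen_ring {fr X1, fr X2, fr [:f:] / fr X2}"
  using assms
proof (induction p arbitrary: n)
  case 0
  have "Fract 0 (X2 ^ n) = (0 :: 'a bipoly fract)"
    by (simp add: Zero_fract_def eq_fract)
  then show ?case
    by (simp add: zero_in_gen_ring)
next
  case (pCons a q n)
  let ?G = "{fr X1, fr X2, fr [:f:] / fr X2}"
  have const: "fr [:d:] \<in> gen_ring ?G" for d
    using fr_in_x1_in_gen_ring[of ?G d] by (simp add: in_x1_def)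
  have X2: "fr X2 \<in> gen_ring ?G"
    by (simp add: gen_ring.gen)
  have x2': "Fract [:f:] X2 \<in> gen_ring ?G"
    using gen_ring.gen[of "fr [:f:] / fr X2" ?G] by (simp add: fr_def)
  show ?case
  proof (cases n)
    case 0
    have "Fract (pCons a q) (X2 ^ n) = fr [:a:] + fr X2 * Fract q (X2 ^ 0)"
      using 0 by (simp add: fr_def X2_eq monom_Suc)
    then show ?thesis
      using pCons.IH[OF exchange_numerator_0] const X2 by (auto intro: gen_ring.intros)
  next
    case (Suc m)
    txt \<open>The constant term is a = F^n b, so p / x_2^n = b (F / x_2)^n + q / x_2^m.\<close>
    have q: "exchange_numerator f m q"
      using pCons.prems Suc unfolding exchange_numerator_def
      by (metis coeff_pCons_Suc diff_Suc_Suc)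
    obtain b where b: "a = f ^ n * b"
      using pCons.prems unfolding exchange_numerator_def by (metis coeff_pCons_0 diff_zero dvdE)
    have "Fract (pCons a q) (X2 ^ n) = Fract ([:b:] * [:f:] ^ n + X2 * q) (X2 ^ n)"
      by (simp add: b X2_eq monom_Suc poly_const_pow algebra_simps)
    also have "\<dots> = Fract ([:b:] * [:f:] ^ n) (X2 ^ n) + Fract (X2 * q) (X2 ^ n)"
      by (subst Fract_add_same_denom) simp_all
    also have "\<dots> = fr [:b:] * Fract [:f:] X2 ^ n + Fract q (X2 ^ m)"
      using Suc mult_fract_cancel[OF X2_nonzero, of q "X2 ^ m"] by (simp add: fr_def Fract_power)
    also have "\<dots> \<in> gen_ring ?G"
      by (intro gen_ring.add gen_ring.mult const power_in_gen_ring x2' pCons.IH q)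
    finally show ?thesis .
  qed
qed

lemma Laurent_x2_elem_as_Fract:
  "z \<in> gen_ring {fr X1, fr X2, inverse (fr X2)} \<Longrightarrow> \<exists>p n. z = Fract p (X2 ^ n :: 'a::idom bipoly)"
proof (induction rule: gen_ring.induct)
  case (const c)
  have "fr [:[:c:]:] = Fract [:[:c:]:] (X2 ^ 0 :: 'a bipoly)"
    by (simp add: fr_def)
  then show ?case by blast
next
  case (gen g)
  then consider "g = Fract X1 (X2 ^ 0)" | "g = Fract X2 (X2 ^ 0)" | "g = Fract 1 (X2 ^ 1)"
    by (auto simp: fr_def)
  then show ?case by cases blast+
next
  case (add a b)
  then obtain p n q m where "a = Fract p (X2 ^ n)" and "b = Fract q (X2 ^ m)"
    by blast
  then have "a + b = Fract (p * X2 ^ m + q * X2 ^ n) (X2 ^ (n + m))"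
    by (simp add: power_add)
  then show ?case by blast
next
  case (neg a)
  then obtain p n where "a = Fract p (X2 ^ n)"
    by blast
  then have "- a = Fract (- p) (X2 ^ n)"
    by simp
  then show ?case by blast
next
  case (mult a b)
  then obtain p n q m where "a = Fract p (X2 ^ n)" and "b = Fract q (X2 ^ m)"
    by blast
  then have "a * b = Fract (p * q) (X2 ^ (n + m))"
    by (simp add: power_add)
  then show ?case by blast
qed

lemma Laurent_x1_exchange_elem_as_Fract:
  fixes f :: "'a::idom poly"
  shows "z \<in> gen_ring {fr X1, inverse (fr X1), fr X2, fr [:f:] / fr X2} \<Longrightarrow>
    \<exists>q N m. exchange_numerator f m q \<and> z = Fract q (X1 ^ N * X2 ^ m)"
proof (induction rule: gen_ring.induct)
  case (const c)
  have "fr [:[:c:]:] = Fract [:[:c:]:] (X1 ^ 0 * X2 ^ 0)"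
    by (simp add: fr_def)
  then show ?case
    using exchange_numerator_0 by blast
next
  case (gen g)
  then consider "g = Fract X1 (X1 ^ 0 * X2 ^ 0)" | "g = Fract 1 (X1 ^ 1 * X2 ^ 0)"
    | "g = Fract X2 (X1 ^ 0 * X2 ^ 0)" | "g = Fract [:f:] (X1 ^ 0 * X2 ^ 1)"
    by (auto simp: fr_def)
  then show ?case
    using exchange_numerator_0 exchange_numerator_const_f by cases blast+
next
  case (add a b)
  then obtain p n N q m M where p: "exchange_numerator f n p" and q: "exchange_numerator f m q"
    and "a = Fract p (X1 ^ N * X2 ^ n)" and "b = Fract q (X1 ^ M * X2 ^ m)"
    by blast
  then have "a + b = Fract (p * (X1 ^ M * X2 ^ m) + q * (X1 ^ N * X2 ^ n)) (X1 ^ (N + M) * X2 ^ (n + m))"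
    by (simp add: power_add algebra_simps)
  moreover have "exchange_numerator f (n + m) (p * (X1 ^ M * X2 ^ m) + q * (X1 ^ N * X2 ^ n))"
    using exchange_numerator_mult[OF p exchange_numerator_X1_X2_power]
      exchange_numerator_mult[OF q exchange_numerator_X1_X2_power[of f n N]]
    by (intro exchange_numerator_add) (simp_all add: add.commute)
  ultimately show ?case by blast
next
  case (neg a)
  then obtain p n N where "exchange_numerator f n p" and "a = Fract p (X1 ^ N * X2 ^ n)"
    by blast
  then have "exchange_numerator f n (- p) \<and> - a = Fract (- p) (X1 ^ N * X2 ^ n)"
    by (simp add: exchange_numerator_uminus)
  then show ?case by blast
next
  case (mult a b)
  then obtain p n N q m M where p: "exchange_numerator f n p" and q: "exchange_numerator f m q"
    and "a = Fract p (X1 ^ N * X2 ^ n)" and "b = Fract q (X1 ^ M * X2 ^ m)"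
    by blast
  then have "a * b = Fract (p * q) (X1 ^ (N + M) * X2 ^ (n + m))"
    by (simp add: power_add algebra_simps)
  then show ?case
    using exchange_numerator_mult[OF p q] by blast
qed

lemma Laurent_inter_eq_exchange_ring:
  fixes f :: "'a::idom poly"
  assumes "\<not> [:0, 1:] dvd f"
  shows "gen_ring {fr X1, fr X2, inverse (fr X2)} \<inter> gen_ring {fr X1, inverse (fr X1), fr X2, fr [:f:] / fr X2}
       = gen_ring {fr X1, fr X2, fr [:f:] / fr X2}"
    (is "?A \<inter> ?B = ?C")
proof
  show "?A \<inter> ?B \<subseteq> ?C"
  proof
    fix z assume z: "z \<in> ?A \<inter> ?B"
    obtain p n where zp: "z = Fract p (X2 ^ n)"
      using Laurent_x2_elem_as_Fract z by blast
    obtain q N m where q: "exchange_numerator f m q" and zq: "z = Fract q (X1 ^ N * X2 ^ m)"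
      using Laurent_x1_exchange_elem_as_Fract[of z f] z by blast
    from zp zq have "X1 ^ N * (p * X2 ^ m) = q * X2 ^ n"
      by (simp add: eq_fract algebra_simps)
    with exchange_numerator_mult[OF q exchange_numerator_X2_power]
    have "exchange_numerator f (m + n) (p * X2 ^ m)"
      using exchange_numerator_cancel_X1_power[OF assms] by metis
    moreover have "z = Fract (p * X2 ^ m) (X2 ^ (m + n))"
      unfolding zp by (simp add: eq_fract power_add algebra_simps)
    ultimately show "z \<in> ?C"
      using Fract_exchange_numerator_in_gen_ring by simp
  qed
next
  have "fr (in_x1 f) * inverse (fr X2) \<in> ?A"
    by (intro gen_ring.mult fr_in_x1_in_gen_ring gen_ring.gen) auto
  then have "fr [:f:] / fr X2 \<in> ?A"
    by (simp add: in_x1_def divide_inverse)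
  then have "?C \<subseteq> ?A"
    by (intro gen_ring_subset) (auto intro: gen_ring.gen)
  moreover have "?C \<subseteq> ?B"
    by (intro gen_ring_subset) (auto intro: gen_ring.gen)
  ultimately show "?C \<subseteq> ?A \<inter> ?B" by blast
qed

theorem lemma4p4:
  fixes f1 f2 :: "'a::{factorial_semiring, idom, ring_char_0} poly"
  assumes irr1: "irreducible (in_x2 f1)"
      and irr2: "irreducible (in_x1 f2)"
      and ndvd1: "\<not> X1 dvd in_x2 f1" and ndvd1': "\<not> X2 dvd in_x2 f1"
      and ndvd2: "\<not> X1 dvd in_x1 f2" and ndvd2': "\<not> X2 dvd in_x1 f2"
      and hat1: "hatF1 f1 f2 = fr (in_x2 f1)"
      and hat2: "hatF2 f1 f2 = fr (in_x1 f2)"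
  shows "let x1 = fr X1; x2 = fr X2; x2' = fr (in_x1 f2) / fr X2 in
         gen_ring {x1, x2, inverse x2} \<inter> gen_ring {x1, inverse x1, x2, x2'}
           = gen_ring {x1, x2, x2'}"
proof -
  have "\<not> [:0, 1:] dvd f2"
  proof
    assume "[:0, 1:] dvd f2"
    then have "X1 dvd in_x1 f2"
      by (auto simp: X1_eq in_x1_def elim!: dvdE)
    with ndvd2 show False ..
  qed
  then show ?thesis
    using Laurent_inter_eq_exchange_ring by (simp add: Let_def in_x1_def)
qed

end
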